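(* Suppose the RB is stochastic monotone, i.e. satisfies: (D1) for each $a\in\{0,1\}$ and all $x<y$ in $\mathcal X$, $\sum_{w\ge z}P_{xw}(a)\le\sum_{w\ge z}P_{yw}(a)$ for every $z\in\mathcal X$; (D2) for every $z\in\mathcal X$, $S_{zx}(a):=\sum_{w\ge z}P_{xw}(a)$ is submodular in $(x,a)$; (D3) for each $a\in\{0,1\}$, $c(x,a)$ is non-decreasing in $x$; (D4) $c(x,a)$ is submodular in $(x,a)$. Then: 1. for every $\lambda\in\mathbb R$ there exists a threshold $\ell_\lambda\in\{0,\dots,|\mathcal X|\}$ such that the threshold policy $g^{(\ell_\lambda)}$ is optimal for minimizing $J^{(g)}_\lambda$ (if several such thresholds exist, $\ell_\lambda$ denotes the largest); 2. if, for every $x\in\mathcal X$, $N^{(g^{(\ell)})}(x)$ is non-increasing in $\ell$, then $\ell_\lambda$ is non-decreasing in $\lambda$; consequently the RB is indexable, its Whittle index $w(x)$ is non-decreasing in $x$, and for any $\ell\in\{0,\dots,|\mathcal X|-1\}$ the set $\{x: N^{(g^{(\ell)})}(x)\ne N^{(g^{(\ell+1)})}(x)\}$ is non-empty and for any $x$ in it, $w(\ell+1)=\dfrac{D^{(g^{(\ell+1)})}(x)-D^{(g^{(\ell)})}(x)}{N^{(g^{(\ell)})}(x)-N^{(g^{(\ell+1)})}(x)}$.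
   Context: A restless bandit (RB) has state space $\mathcal X=\{1,\dots,|\mathcal X|\}$ (totally ordered), actions $\{0,1\}$ (0 = passive, 1 = active, ordered $0<1$), transition matrices $P(0),P(1)$, cost $c:\mathcal X\times\{0,1\}\to\mathbb R$, discount factor $\beta\in(0,1)$. A function $f$ on a product of ordered sets is submodular if $f(x_1,y_2)-f(x_1,y_1)\ge f(x_2,y_2)-f(x_2,y_1)$ whenever $x_2\ge x_1$, $y_2\ge y_1$. For $\lambda\in\mathbb R$, $c_\lambda(x,a)=c(x,a)+\lambda a$. For a Markov policy $g$ (with $X_{t+1}$ drawn from $P_{X_t\,\cdot}(g(X_t))$): $J^{(g)}_\lambda(x)=(1-\beta)\mathbb E[\sum_{t\ge0}\beta^tc_\lambda(X_t,g(X_t))\mid X_0=x]$, $D^{(g)}(x)=(1-\beta)\mathbb E[\sum_{t\ge0}\beta^tc(X_t,g(X_t))\mid X_0=x]$, $N^{(g)}(x)=(1-\beta)\mathbb E[\sum_{t\ge0}\beta^tg(X_t)\mid X_0=x]$. For $\ell\in\{0,\dots,|\mathcal X|\}$, $g^{(\ell)}$ is passive at states $x\le\ell$ and active at states $x>\ell$. $V_\lambda$ is the fixed point of $V_\lambda(x)=\min\{H_\lambda(x,0),H_\lambda(x,1)\}$, $H_\lambda(x,a)=(1-\beta)c_\lambda(x,a)+\beta\sum_yP_{xy}(a)V_\lambda(y)$; $g_\lambda(x)=0$ iff $H_\lambda(x,0)<H_\lambda(x,1)$; $\Pi_\lambda=\{x:g_\lambda(x)=0\}$. Indexable: $\lambda'\le\lambda''\Rightarrow\Pi_{\lambda'}\subseteq\Pi_{\lambda''}$;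 Whittle index $w(x)=\inf\{\lambda:x\in\Pi_\lambda\}$. *)

theory Defs
  imports "HOL-Analysis.Analysis"
begin

text \<open>State space X = {1..n}; actions 0 (passive) and 1 (active) encoded as nat.
  P a x y is the transition probability from x to y under action a; c x a the cost.\<close>

fun Pt :: "nat \<Rightarrow> (nat \<Rightarrow> nat \<Rightarrow> nat \<Rightarrow> real) \<Rightarrow> (nat \<Rightarrow> nat) \<Rightarrow> nat \<Rightarrow> nat \<Rightarrow> nat \<Rightarrow> real" where
  "Pt n P g 0 x y = (if x = y then 1 else 0)"
| "Pt n P g (Suc t) x y = (\<Sum>z\<in>{1..n}. Pt n P g t x z * P (g z) z y)"

text \<open>(1-beta) E[ sum_t beta^t r(X_t, g(X_t)) | X_0 = x ], written out via the t-step laws.\<close>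
definition disc_val :: "nat \<Rightarrow> (nat \<Rightarrow> nat \<Rightarrow> nat \<Rightarrow> real) \<Rightarrow> real \<Rightarrow> (nat \<Rightarrow> nat)
    \<Rightarrow> (nat \<Rightarrow> nat \<Rightarrow> real) \<Rightarrow> nat \<Rightarrow> real" where
  "disc_val n P \<beta> g r x = (1 - \<beta>) * (\<Sum>t. \<beta> ^ t * (\<Sum>y\<in>{1..n}. Pt n P g t x y * r y (g y)))"

definition Jlam where
  "Jlam n P c \<beta> lam g x = disc_val n P \<beta> g (\<lambda>y a. c y a + lam * real a) x"

definition Dcost where
  "Dcost n P c \<beta> g x = disc_val n P \<beta> g c x"

definition Nact where
  "Nact n P \<beta> g x = disc_val n P \<beta> g (\<lambda>y a. real a) x"

definition markov_policy :: "nat \<Rightarrow> (nat \<Rightarrow> nat) \<Rightarrow> bool" where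
  "markov_policy n g = (\<forall>x\<in>{1..n}. g x \<in> {0, 1})"

definition thr :: "nat \<Rightarrow> nat \<Rightarrow> nat" where
  "thr l = (\<lambda>x. if x \<le> l then 0 else 1)"

definition optimal where
  "optimal n P c \<beta> lam g = (markov_policy n g \<and>
     (\<forall>g'. markov_policy n g' \<longrightarrow> (\<forall>x\<in>{1..n}. Jlam n P c \<beta> lam g x \<le> Jlam n P c \<beta> lam g' x)))"

definition ell where
  "ell n P c \<beta> lam = Max {l\<in>{0..n}. optimal n P c \<beta> lam (thr l)}"

definition Hq where
  "Hq n P c \<beta> lam V x a = (1 - \<beta>) * (c x a + lam * real a) + \<beta> * (\<Sum>y\<in>{1..n}. P a x y * V y)"

definition Vlam where
  "Vlam n P c \<beta> lam = (THE V. (\<forall>x\<in>{1..n}. V x = min (Hq n P c \<beta> lam V x 0) (Hq n P c \<beta> lam V x 1))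
                               \<and> (\<forall>x. x \<notin> {1..n} \<longrightarrow> V x = 0))"

definition passive_set where
  "passive_set n P c \<beta> lam = {x\<in>{1..n}. Hq n P c \<beta> lam (Vlam n P c \<beta> lam) x 0 < Hq n P c \<beta> lam (Vlam n P c \<beta> lam) x 1}"

definition indexable where
  "indexable n P c \<beta> = (\<forall>l1 l2. l1 \<le> l2 \<longrightarrow> passive_set n P c \<beta> l1 \<subseteq> passive_set n P c \<beta> l2)"

definition whittle where
  "whittle n P c \<beta> x = Inf {lam. x \<in> passive_set n P c \<beta> lam}"

definition submodular_on :: "'a::order set \<Rightarrow> 'b::order set \<Rightarrow> ('a \<Rightarrow> 'b \<Rightarrow> real) \<Rightarrow> bool" where
  "submodular_on A B f = (\<forall>x1\<in>A. \<forall>x2\<in>A. \<forall>y1\<in>B. \<forall>y2\<in>B. x1 \<le> x2 \<and> y1 \<le> y2 \<longrightarrow>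
      f x1 y2 - f x1 y1 \<ge> f x2 y2 - f x2 y1)"

end

(*
  Value iteration preserves functions that are nondecreasing in the state (D1, D3), so the
  value function V is nondecreasing. Rewriting expectations by summation by parts as sums over
  the tail sums of P, (D2) and (D4) then make the action gap H(x,1) - H(x,0) nonincreasing in x:
  the states where passivity is strictly better form an initial segment, and the threshold
  policy at its end is greedy, hence optimal.

  The gap is Lipschitz in the charge lambda and grows like (1 - beta) lambda, so it vanishes at
  the Whittle index w(l+1) of state l+1. Monotonicity in x then makes both g^(l) and g^(l+1)
  greedy there; equating their costs D + w N gives the index formula, and choosing two costs
  that differ only at (l+1, active) shows that N cannot agree for both policies.

  If N of threshold policies decreases in the threshold, two optimal thresholds for charges
  lambda1 < lambda2 with the larger one at lambda1 must have equal N and D, so they can be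
  exchanged; this gives monotonicity of the largest optimal threshold and indexability.
*)
theory Submission
  imports Defs
begin

lemma sum_mult_eq_tail_sums:
  fixes p W :: "nat \<Rightarrow> real"
  shows "(\<Sum>y\<in>{1..m}. p y * W y)
    = W 1 * (\<Sum>y\<in>{1..m}. p y) + (\<Sum>z\<in>{2..m}. (W z - W (z - 1)) * (\<Sum>w\<in>{z..m}. p w))"
proof (induction m)
  case (Suc m)
  show ?case
  proof (cases "m = 0")
    case False
    have "(\<Sum>z\<in>{2..m}. W z - W (z - 1)) = (\<Sum>i=1..m-1. W (Suc i) - W i)"
      using sum.shift_bounds_cl_Suc_ivl[of "\<lambda>z. W z - W (z - 1)" 1 "m - 1"] False
      by (simp add: numeral_2_eq_2)
    also have "\<dots> = W m - W 1"
      using sum_Suc_diff[of 1 "m - 1" W] False by simp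
    finally have telescope: "W m = W 1 + (\<Sum>z\<in>{2..m}. W z - W (z - 1))"
      by simp
    have "(\<Sum>z\<in>{2..m}. (W z - W (z - 1)) * (\<Sum>w\<in>{z..Suc m}. p w))
        = (\<Sum>z\<in>{2..m}. (W z - W (z - 1)) * (\<Sum>w\<in>{z..m}. p w)) + (W m - W 1) * p (Suc m)"
      by (simp add: telescope distrib_left sum.distrib sum_distrib_right)
    then show ?thesis
      using Suc.IH False by (simp add: algebra_simps)
  qed simp
qed simp

lemma abs_min_diff_le: "\<bar>min a b - min a' b'\<bar> \<le> max \<bar>a - a'\<bar> \<bar>b - b'\<bar>" for a b :: real
  by (simp add: min_def max_def abs_if)

section \<open>Discounted two-action decision processes\<close>

locale discounted_mdp =
  fixes n :: nat and P :: "nat \<Rightarrow> nat \<Rightarrow> nat \<Rightarrow> real" and \<beta> :: real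
  assumes discount_pos: "0 < \<beta>" and discount_lt_1: "\<beta> < 1"
    and P_nonneg: "a \<in> {0,1} \<Longrightarrow> x \<in> {1..n} \<Longrightarrow> y \<in> {1..n} \<Longrightarrow> 0 \<le> P a x y"
    and P_row_sum: "a \<in> {0,1} \<Longrightarrow> x \<in> {1..n} \<Longrightarrow> (\<Sum>y\<in>{1..n}. P a x y) = 1"
begin

abbreviation Pv :: "nat \<Rightarrow> (nat \<Rightarrow> real) \<Rightarrow> nat \<Rightarrow> real" where
  "Pv a v x \<equiv> \<Sum>y\<in>{1..n}. P a x y * v y"

lemma Pv_const:
  assumes "a \<in> {0,1}" "x \<in> {1..n}"
  shows "Pv a (\<lambda>_. k) x = k"
  using P_row_sum[OF assms] by (simp flip: sum_distrib_right)

lemma Pv_le: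
  assumes "a \<in> {0,1}" "x \<in> {1..n}" and "\<And>y. y \<in> {1..n} \<Longrightarrow> v y \<le> K"
  shows "Pv a v x \<le> K"
proof -
  have "Pv a v x \<le> Pv a (\<lambda>_. K) x"
    using assms by (intro sum_mono mult_left_mono P_nonneg) auto
  then show ?thesis
    using Pv_const[OF assms(1,2)] by simp
qed

lemma Pv_ge:
  assumes "a \<in> {0,1}" "x \<in> {1..n}" and "\<And>y. y \<in> {1..n} \<Longrightarrow> K \<le> v y"
  shows "K \<le> Pv a v x"
  using Pv_le[OF assms(1,2), of "\<lambda>y. - v y" "- K"] assms(3)
  by (simp add: sum_negf)

lemma abs_Pv_le:
  assumes "a \<in> {0,1}" "x \<in> {1..n}"
  shows "\<bar>Pv a v x\<bar> \<le> Pv a (\<lambda>y. \<bar>v y\<bar>) x"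
  using sum_abs[of "\<lambda>y. P a x y * v y" "{1..n}"] P_nonneg[OF assms]
  by (simp add: abs_mult)

lemma discounted_max_principle:
  assumes policy: "\<And>x. x \<in> {1..n} \<Longrightarrow> a x \<in> {0,1}"
    and sub: "\<And>x. x \<in> {1..n} \<Longrightarrow> e x \<le> \<beta> * Pv (a x) e x"
    and x: "x \<in> {1..n}"
  shows "e x \<le> 0"
proof -
  obtain x0 where x0: "x0 \<in> {1..n}" and "e x0 = Max (e ` {1..n})"
    using Max_in[of "e ` {1..n}"] x by fastforce
  then have max: "\<And>y. y \<in> {1..n} \<Longrightarrow> e y \<le> e x0"
    by simp
  have "e x0 \<le> \<beta> * e x0"
    using sub[OF x0] Pv_le[OF policy[OF x0] x0 max] discount_pos
    by (meson mult_left_mono less_imp_le order_trans)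
  then have "e x0 \<le> 0"
    using discount_lt_1 by (simp add: mult_le_cancel_right1)
  then show ?thesis
    using max[OF x] by linarith
qed

lemma Pt_nonneg:
  assumes g: "markov_policy n g" and y: "y \<in> {1..n}"
  shows "0 \<le> Pt n P g t x y"
  using y
proof (induction t arbitrary: y)
  case (Suc t)
  show ?case
    using g Suc unfolding markov_policy_def
    by (auto intro!: sum_nonneg mult_nonneg_nonneg P_nonneg)
qed simp

lemma Pt_row_sum_le_1:
  assumes g: "markov_policy n g"
  shows "(\<Sum>y\<in>{1..n}. Pt n P g t x y) \<le> 1"
proof (induction t)
  case (Suc t)
  have "(\<Sum>y\<in>{1..n}. Pt n P g (Suc t) x y) = (\<Sum>z\<in>{1..n}. Pt n P g t x z * (\<Sum>y\<in>{1..n}. P (g z) z y))"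
    by (simp add: sum_distrib_left) (rule sum.swap)
  also have "\<dots> = (\<Sum>z\<in>{1..n}. Pt n P g t x z)"
    using g P_row_sum unfolding markov_policy_def by simp
  finally show ?case
    using Suc by simp
qed simp

lemma Pt_le_1:
  assumes g: "markov_policy n g" and y: "y \<in> {1..n}"
  shows "Pt n P g t x y \<le> 1"
  using member_le_sum[of y "{1..n}" "Pt n P g t x"] Pt_nonneg[OF g] Pt_row_sum_le_1[OF g, of t x] y
  by force

lemma Pt_Suc_first_step:
  assumes x: "x \<in> {1..n}" and y: "y \<in> {1..n}"
  shows "Pt n P g (Suc t) x y = Pv (g x) (\<lambda>z. Pt n P g t z y) x"
  using y
proof (induction t arbitrary: y)
  case 0
  then show ?case
    using x by (simp add: if_distrib[of "\<lambda>u. u * _"] if_distrib[of "\<lambda>u. _ * u"] cong: if_cong)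
next
  case (Suc t)
  have "Pt n P g (Suc (Suc t)) x y = (\<Sum>w\<in>{1..n}. Pv (g x) (\<lambda>z. Pt n P g t z w) x * P (g w) w y)"
    using Suc.IH by simp
  also have "\<dots> = Pv (g x) (\<lambda>z. Pt n P g (Suc t) z y) x"
    by (simp add: sum_distrib_left sum_distrib_right mult.assoc) (rule sum.swap)
  finally show ?case .
qed

definition exp_reward :: "(nat \<Rightarrow> nat) \<Rightarrow> (nat \<Rightarrow> nat \<Rightarrow> real) \<Rightarrow> nat \<Rightarrow> nat \<Rightarrow> real" where
  "exp_reward g r t x = (\<Sum>y\<in>{1..n}. Pt n P g t x y * r y (g y))"

lemma disc_val_eq_suminf: "disc_val n P \<beta> g r x = (1 - \<beta>) * (\<Sum>t. \<beta> ^ t * exp_reward g r t x)"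
  unfolding disc_val_def exp_reward_def ..

lemma exp_reward_0: "x \<in> {1..n} \<Longrightarrow> exp_reward g r 0 x = r x (g x)"
  by (simp add: exp_reward_def if_distrib[of "\<lambda>u. u * _"] cong: if_cong)

lemma exp_reward_Suc:
  assumes "x \<in> {1..n}"
  shows "exp_reward g r (Suc t) x = Pv (g x) (exp_reward g r t) x"
proof -
  have "exp_reward g r (Suc t) x = (\<Sum>y\<in>{1..n}. Pv (g x) (\<lambda>z. Pt n P g t z y) x * r y (g y))"
    unfolding exp_reward_def by (intro sum.cong refl) (simp add: Pt_Suc_first_step[OF assms] del: Pt.simps)
  also have "\<dots> = Pv (g x) (exp_reward g r t) x"
    unfolding exp_reward_def by (simp add: sum_distrib_left sum_distrib_right mult.assoc) (rule sum.swap)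
  finally show ?thesis .
qed

lemma summable_exp_reward:
  assumes g: "markov_policy n g"
  shows "summable (\<lambda>t. \<beta> ^ t * exp_reward g r t x)"
proof (rule summable_comparison_test)
  define B where "B = (\<Sum>y\<in>{1..n}. \<bar>r y (g y)\<bar>)"
  have "\<bar>exp_reward g r t x\<bar> \<le> B" for t
    unfolding exp_reward_def B_def
    using Pt_nonneg[OF g] Pt_le_1[OF g]
    by (intro order_trans[OF sum_abs] sum_mono) (auto simp: abs_mult intro: mult_left_le_one_le)
  then show "\<exists>N. \<forall>t\<ge>N. norm (\<beta> ^ t * exp_reward g r t x) \<le> B * \<beta> ^ t"
    using discount_pos by (auto simp: abs_mult mult.commute intro!: mult_left_mono)
  show "summable (\<lambda>t. B * \<beta> ^ t)"
    using discount_pos discount_lt_1 by (intro summable_mult summable_geometric) auto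
qed

lemma disc_val_eq:
  assumes g: "markov_policy n g" and x: "x \<in> {1..n}"
  shows "disc_val n P \<beta> g r x = (1 - \<beta>) * r x (g x) + \<beta> * Pv (g x) (disc_val n P \<beta> g r) x"
proof -
  let ?S = "\<lambda>x. \<Sum>t. \<beta> ^ t * exp_reward g r t x"
  have summable: "summable (\<lambda>t. P (g x) x y * (\<beta> ^ t * exp_reward g r t y))" for y
    by (intro summable_mult summable_exp_reward[OF g])
  have "(\<Sum>t. \<beta> ^ Suc t * exp_reward g r (Suc t) x)
      = (\<Sum>t. \<beta> * (\<Sum>y\<in>{1..n}. P (g x) x y * (\<beta> ^ t * exp_reward g r t y)))"
    by (simp add: exp_reward_Suc[OF x] sum_distrib_left mult_ac)
  also have "\<dots> = \<beta> * (\<Sum>y\<in>{1..n}. \<Sum>t. P (g x) x y * (\<beta> ^ t * exp_reward g r t y))"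
    using summable by (simp add: suminf_mult summable_sum suminf_sum)
  also have "\<dots> = \<beta> * Pv (g x) ?S x"
    using summable_exp_reward[OF g] by (simp add: suminf_mult)
  finally have "?S x = r x (g x) + \<beta> * Pv (g x) ?S x"
    using suminf_split_head[OF summable_exp_reward[OF g]] exp_reward_0[OF x] by simp
  then show ?thesis
    by (simp add: disc_val_eq_suminf algebra_simps sum_distrib_left)
qed

lemma disc_val_add_scaled:
  assumes g: "markov_policy n g"
  shows "disc_val n P \<beta> g (\<lambda>y a. r y a + k * s y a) x = disc_val n P \<beta> g r x + k * disc_val n P \<beta> g s x"
proof -
  have "exp_reward g (\<lambda>y a. r y a + k * s y a) t x = exp_reward g r t x + k * exp_reward g s t x" for t
    by (simp add: exp_reward_def algebra_simps sum.distrib sum_distrib_left)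
  then have "(\<Sum>t. \<beta> ^ t * exp_reward g (\<lambda>y a. r y a + k * s y a) t x)
      = (\<Sum>t. \<beta> ^ t * exp_reward g r t x) + k * (\<Sum>t. \<beta> ^ t * exp_reward g s t x)"
    by (simp add: algebra_simps suminf_add summable_exp_reward[OF g] summable_mult
        flip: suminf_mult)
  then show ?thesis
    by (simp add: disc_val_eq_suminf algebra_simps)
qed

lemma disc_val_pos:
  assumes g: "markov_policy n g" and x: "x \<in> {1..n}"
    and nonneg: "\<And>y a. y \<in> {1..n} \<Longrightarrow> 0 \<le> r y a" and pos: "0 < r x (g x)"
  shows "0 < disc_val n P \<beta> g r x"
proof -
  have "0 \<le> \<beta> ^ t * exp_reward g r t x" for t
    unfolding exp_reward_def using discount_pos nonneg Pt_nonneg[OF g]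
    by (intro mult_nonneg_nonneg sum_nonneg) auto
  then have "sum (\<lambda>t. \<beta> ^ t * exp_reward g r t x) {0} \<le> (\<Sum>t. \<beta> ^ t * exp_reward g r t x)"
    by (intro sum_le_suminf summable_exp_reward[OF g]) auto
  then have "r x (g x) \<le> (\<Sum>t. \<beta> ^ t * exp_reward g r t x)"
    using exp_reward_0[OF x] by simp
  then show ?thesis
    using pos discount_lt_1 by (simp add: disc_val_eq_suminf)
qed

lemma policy_equation_unique:
  assumes g: "markov_policy n g"
    and v: "\<And>x. x \<in> {1..n} \<Longrightarrow> v x = (1 - \<beta>) * r x + \<beta> * Pv (g x) v x"
    and w: "\<And>x. x \<in> {1..n} \<Longrightarrow> w x = (1 - \<beta>) * r x + \<beta> * Pv (g x) w x"
    and x: "x \<in> {1..n}"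
  shows "v x = w x"
proof -
  have "u x - u' x \<le> 0"
    if u: "\<And>x. x \<in> {1..n} \<Longrightarrow> u x = (1 - \<beta>) * r x + \<beta> * Pv (g x) u x"
      and u': "\<And>x. x \<in> {1..n} \<Longrightarrow> u' x = (1 - \<beta>) * r x + \<beta> * Pv (g x) u' x" for u u'
  proof (rule discounted_max_principle[where a = g and e = "\<lambda>y. u y - u' y", OF _ _ x])
    show "g y \<in> {0,1}" if "y \<in> {1..n}" for y
      using g that unfolding markov_policy_def by blast
    show "u y - u' y \<le> \<beta> * Pv (g y) (\<lambda>y. u y - u' y) y" if "y \<in> {1..n}" for y
      using u[OF that] u'[OF that] by (simp add: right_diff_distrib sum_subtractf)
  qed
  from this[OF v w] this[OF w v] show ?thesis
    by simp
qed

definition bellman_fixpoint :: "(nat \<Rightarrow> nat \<Rightarrow> real) \<Rightarrow> real \<Rightarrow> (nat \<Rightarrow> real) \<Rightarrow> bool" where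
  "bellman_fixpoint c lam v \<longleftrightarrow>
     (\<forall>x\<in>{1..n}. v x = min (Hq n P c \<beta> lam v x 0) (Hq n P c \<beta> lam v x 1))"

lemma abs_Hq_diff_le:
  assumes "a \<in> {0,1}" "x \<in> {1..n}"
    and "\<bar>c x a + lam * real a - (c' x a + mu * real a)\<bar> \<le> \<delta>"
  shows "\<bar>Hq n P c \<beta> lam v x a - Hq n P c' \<beta> mu w x a\<bar>
    \<le> (1 - \<beta>) * \<delta> + \<beta> * Pv a (\<lambda>y. \<bar>v y - w y\<bar>) x"
proof -
  have "Hq n P c \<beta> lam v x a - Hq n P c' \<beta> mu w x a
      = (1 - \<beta>) * (c x a + lam * real a - (c' x a + mu * real a)) + \<beta> * Pv a (\<lambda>y. v y - w y) x"
    by (simp add: Hq_def algebra_simps sum_subtractf)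
  also have "\<bar>\<dots>\<bar> \<le> (1 - \<beta>) * \<delta> + \<beta> * Pv a (\<lambda>y. \<bar>v y - w y\<bar>) x"
  proof (rule order_trans[OF abs_triangle_ineq add_mono])
    show "\<bar>(1 - \<beta>) * (c x a + lam * real a - (c' x a + mu * real a))\<bar> \<le> (1 - \<beta>) * \<delta>"
      using assms(3) discount_lt_1 by (simp add: abs_mult)
    show "\<bar>\<beta> * Pv a (\<lambda>y. v y - w y) x\<bar> \<le> \<beta> * Pv a (\<lambda>y. \<bar>v y - w y\<bar>) x"
      using abs_Pv_le[OF assms(1,2), of "\<lambda>y. v y - w y"] discount_pos by (simp add: abs_mult)
  qed
  finally show ?thesis .
qed

lemma bellman_fixpoint_dist:
  assumes v: "bellman_fixpoint c lam v" and w: "bellman_fixpoint c' mu w"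
    and cost: "\<And>x a. x \<in> {1..n} \<Longrightarrow> a \<in> {0,1} \<Longrightarrow>
      \<bar>c x a + lam * real a - (c' x a + mu * real a)\<bar> \<le> \<delta>"
    and x: "x \<in> {1..n}"
  shows "\<bar>v x - w x\<bar> \<le> \<delta>"
proof -
  define d where "d y a = \<bar>Hq n P c \<beta> lam v y a - Hq n P c' \<beta> mu w y a\<bar>" for y a
  \<comment> \<open>an action where the two Q-values differ most, so that a single policy carries the estimate\<close>
  define act where "act y = (if d y 0 \<le> d y 1 then 1 else 0 :: nat)" for y
  have "\<bar>v x - w x\<bar> - \<delta> \<le> 0"
  proof (rule discounted_max_principle[where a = act and e = "\<lambda>y. \<bar>v y - w y\<bar> - \<delta>", OF _ _ x])
    show "act y \<in> {0,1}" for y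
      by (simp add: act_def)
    fix y assume y: "y \<in> {1..n}"
    have "\<bar>v y - w y\<bar> \<le> max (d y 0) (d y 1)"
      using v w y unfolding bellman_fixpoint_def d_def by (metis abs_min_diff_le)
    also have "\<dots> = d y (act y)"
      by (simp add: act_def max_def)
    also have "\<dots> \<le> (1 - \<beta>) * \<delta> + \<beta> * Pv (act y) (\<lambda>z. \<bar>v z - w z\<bar>) y"
      unfolding d_def by (rule abs_Hq_diff_le) (use y cost in \<open>auto simp: act_def\<close>)
    also have "\<dots> = \<beta> * Pv (act y) (\<lambda>z. \<bar>v z - w z\<bar> - \<delta>) y + \<delta>"
      using Pv_const[of "act y" y \<delta>] y
      by (simp add: act_def algebra_simps sum_subtractf)
    finally show "\<bar>v y - w y\<bar> - \<delta> \<le> \<beta> * Pv (act y) (\<lambda>z. \<bar>v z - w z\<bar> - \<delta>) y"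
      by simp
  qed
  then show ?thesis
    by simp
qed

definition bellman_op :: "(nat \<Rightarrow> nat \<Rightarrow> real) \<Rightarrow> real \<Rightarrow> (nat \<Rightarrow> real) \<Rightarrow> nat \<Rightarrow> real" where
  "bellman_op c lam v x =
     (if x \<in> {1..n} then min (Hq n P c \<beta> lam v x 0) (Hq n P c \<beta> lam v x 1) else 0)"

definition value_iter :: "(nat \<Rightarrow> nat \<Rightarrow> real) \<Rightarrow> real \<Rightarrow> nat \<Rightarrow> nat \<Rightarrow> real" where
  "value_iter c lam k = (bellman_op c lam ^^ k) (\<lambda>_. 0)"

lemma value_iter_Suc: "value_iter c lam (Suc k) = bellman_op c lam (value_iter c lam k)"
  by (simp add: value_iter_def)

lemma bellman_op_contraction:
  assumes "\<And>y. y \<in> {1..n} \<Longrightarrow> \<bar>v y - w y\<bar> \<le> K" and "0 \<le> K"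
  shows "\<bar>bellman_op c lam v x - bellman_op c lam w x\<bar> \<le> \<beta> * K"
proof (cases "x \<in> {1..n}")
  case True
  have "\<bar>Hq n P c \<beta> lam v x a - Hq n P c \<beta> lam w x a\<bar> \<le> \<beta> * K" if "a \<in> {0,1}" for a
  proof -
    have "Pv a (\<lambda>y. \<bar>v y - w y\<bar>) x \<le> K"
      using Pv_le[OF that True, of "\<lambda>y. \<bar>v y - w y\<bar>" K] assms(1) by blast
    then show ?thesis
      using abs_Hq_diff_le[OF that True, of c lam c lam 0 v w] discount_pos
      by (simp add: order_trans[OF _ mult_left_mono])
  qed
  from this[of 0] this[of 1]
  have bound: "max \<bar>Hq n P c \<beta> lam v x 0 - Hq n P c \<beta> lam w x 0\<bar> \<bar>Hq n P c \<beta> lam v x 1 - Hq n P c \<beta> lam w x 1\<bar>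
      \<le> \<beta> * K"
    by simp
  show ?thesis
    using True order_trans[OF abs_min_diff_le bound] unfolding bellman_op_def by simp
next
  case False
  then show ?thesis
    using assms(2) discount_pos unfolding bellman_op_def if_not_P[OF False] by simp
qed

lemma value_iter_convergent: "convergent (\<lambda>k. value_iter c lam k x)"
proof -
  define B where "B = (\<Sum>y\<in>{1..n}. \<bar>value_iter c lam 1 y\<bar>)"
  have B: "\<bar>value_iter c lam 1 y\<bar> \<le> B" for y
    unfolding B_def
    by (cases "y \<in> {1..n}") (auto intro: member_le_sum sum_nonneg simp: value_iter_def bellman_op_def)
  have step: "\<bar>value_iter c lam (Suc k) y - value_iter c lam k y\<bar> \<le> B * \<beta> ^ k" for k y
  proof (induction k arbitrary: y)
    case 0
    show ?case
      using B by (simp add: value_iter_def)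
  next
    case (Suc k)
    have "0 \<le> B * \<beta> ^ k"
      using Suc[of 0] by linarith
    then show ?case
      using bellman_op_contraction[of "value_iter c lam (Suc k)" "value_iter c lam k" "B * \<beta> ^ k" c lam y] Suc
      by (simp add: value_iter_Suc[of c lam "Suc k"] value_iter_Suc[of c lam k] mult_ac)
  qed
  have "summable (\<lambda>k. value_iter c lam (Suc k) x - value_iter c lam k x)"
  proof (rule summable_comparison_test)
    show "\<exists>N. \<forall>k\<ge>N. norm (value_iter c lam (Suc k) x - value_iter c lam k x) \<le> B * \<beta> ^ k"
      using step by auto
    show "summable (\<lambda>k. B * \<beta> ^ k)"
      using discount_pos discount_lt_1 by (intro summable_mult summable_geometric) auto
  qed
  then have "convergent (\<lambda>k. \<Sum>j<k. value_iter c lam (Suc j) x - value_iter c lam j x)"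
    using summable_LIMSEQ convergent_def by blast
  then show ?thesis
    by (simp add: sum_lessThan_telescope[of "\<lambda>j. value_iter c lam j x"] value_iter_def[of c lam 0])
qed

definition value_limit :: "(nat \<Rightarrow> nat \<Rightarrow> real) \<Rightarrow> real \<Rightarrow> nat \<Rightarrow> real" where
  "value_limit c lam x = lim (\<lambda>k. value_iter c lam k x)"

lemma value_iter_tendsto: "(\<lambda>k. value_iter c lam k x) \<longlonglongrightarrow> value_limit c lam x"
  unfolding value_limit_def using value_iter_convergent convergent_LIMSEQ_iff by blast

lemma bellman_op_value_limit: "bellman_op c lam (value_limit c lam) = value_limit c lam"
proof
  fix x
  have "(\<lambda>k. value_iter c lam (Suc k) x) \<longlonglongrightarrow> bellman_op c lam (value_limit c lam) x"
  proof (cases "x \<in> {1..n}")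
    case True
    then show ?thesis
      unfolding value_iter_Suc bellman_op_def Hq_def by (simp, intro tendsto_intros value_iter_tendsto)
  next
    case False
    then show ?thesis
      unfolding value_iter_Suc bellman_op_def if_not_P[OF False] by simp
  qed
  then show "bellman_op c lam (value_limit c lam) x = value_limit c lam x"
    using LIMSEQ_Suc[OF value_iter_tendsto] LIMSEQ_unique by blast
qed

lemma Vlam_eq_value_limit: "Vlam n P c \<beta> lam = value_limit c lam"
  unfolding Vlam_def
proof (rule the_equality)
  let ?L = "value_limit c lam"
  have L: "bellman_fixpoint c lam ?L"
    unfolding bellman_fixpoint_def using bellman_op_value_limit by (metis bellman_op_def)
  have L_zero: "\<forall>x. x \<notin> {1..n} \<longrightarrow> ?L x = 0"
    using bellman_op_value_limit by (metis bellman_op_def)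
  show "(\<forall>x\<in>{1..n}. ?L x = min (Hq n P c \<beta> lam ?L x 0) (Hq n P c \<beta> lam ?L x 1)) \<and>
      (\<forall>x. x \<notin> {1..n} \<longrightarrow> ?L x = 0)"
    using L L_zero unfolding bellman_fixpoint_def by blast
  fix V
  assume V: "(\<forall>x\<in>{1..n}. V x = min (Hq n P c \<beta> lam V x 0) (Hq n P c \<beta> lam V x 1)) \<and>
      (\<forall>x. x \<notin> {1..n} \<longrightarrow> V x = 0)"
  then have V_fix: "bellman_fixpoint c lam V"
    unfolding bellman_fixpoint_def by blast
  have "\<bar>V x - ?L x\<bar> \<le> 0" if "x \<in> {1..n}" for x
    using bellman_fixpoint_dist[OF V_fix L, of 0 x] that by simp
  then show "V = ?L"
    using V L_zero by (metis abs_le_zero_iff eq_iff_diff_eq_0 ext)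
qed

lemma bellman_fixpoint_Vlam: "bellman_fixpoint c lam (Vlam n P c \<beta> lam)"
  unfolding Vlam_eq_value_limit bellman_fixpoint_def using bellman_op_value_limit
  by (metis bellman_op_def)

lemma Vlam_eq_min:
  "x \<in> {1..n} \<Longrightarrow> Vlam n P c \<beta> lam x
     = min (Hq n P c \<beta> lam (Vlam n P c \<beta> lam) x 0) (Hq n P c \<beta> lam (Vlam n P c \<beta> lam) x 1)"
  using bellman_fixpoint_Vlam unfolding bellman_fixpoint_def by blast

lemma Jlam_eq:
  assumes "markov_policy n g" "x \<in> {1..n}"
  shows "Jlam n P c \<beta> lam g x
    = (1 - \<beta>) * (c x (g x) + lam * real (g x)) + \<beta> * Pv (g x) (Jlam n P c \<beta> lam g) x"
  unfolding Jlam_def by (rule disc_val_eq[OF assms])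

lemma Jlam_eq_Dcost_Nact:
  "markov_policy n g \<Longrightarrow> Jlam n P c \<beta> lam g x = Dcost n P c \<beta> g x + lam * Nact n P \<beta> g x"
  unfolding Jlam_def Dcost_def Nact_def by (rule disc_val_add_scaled)

definition greedy :: "(nat \<Rightarrow> nat \<Rightarrow> real) \<Rightarrow> real \<Rightarrow> (nat \<Rightarrow> nat) \<Rightarrow> bool" where
  "greedy c lam g \<longleftrightarrow> markov_policy n g \<and>
     (\<forall>x\<in>{1..n}. Hq n P c \<beta> lam (Vlam n P c \<beta> lam) x (g x) = Vlam n P c \<beta> lam x)"

lemma greedy_exists: "\<exists>g. greedy c lam g"
proof
  let ?H = "Hq n P c \<beta> lam (Vlam n P c \<beta> lam)"
  show "greedy c lam (\<lambda>x. if ?H x 0 \<le> ?H x 1 then 0 else 1)"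
    unfolding greedy_def markov_policy_def using Vlam_eq_min[of _ c lam] by (auto simp: min_def)
qed

lemma Jlam_eq_Vlam_if_greedy:
  assumes g: "greedy c lam g" and x: "x \<in> {1..n}"
  shows "Jlam n P c \<beta> lam g x = Vlam n P c \<beta> lam x"
proof (rule policy_equation_unique[where r = "\<lambda>x. c x (g x) + lam * real (g x)", OF _ _ _ x])
  show g_policy: "markov_policy n g"
    using g unfolding greedy_def by blast
  show "Jlam n P c \<beta> lam g y = (1 - \<beta>) * (c y (g y) + lam * real (g y)) + \<beta> * Pv (g y) (Jlam n P c \<beta> lam g) y"
    if "y \<in> {1..n}" for y
    by (rule Jlam_eq[OF g_policy that])
  show "Vlam n P c \<beta> lam y
      = (1 - \<beta>) * (c y (g y) + lam * real (g y)) + \<beta> * Pv (g y) (Vlam n P c \<beta> lam) y"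
    if "y \<in> {1..n}" for y
    using g that unfolding greedy_def Hq_def by auto
qed

lemma Vlam_le_Jlam:
  assumes g: "markov_policy n g" and x: "x \<in> {1..n}"
  shows "Vlam n P c \<beta> lam x \<le> Jlam n P c \<beta> lam g x"
proof -
  let ?e = "\<lambda>y. Vlam n P c \<beta> lam y - Jlam n P c \<beta> lam g y"
  have "?e x \<le> 0"
  proof (rule discounted_max_principle[where a = g, OF _ _ x])
    show "g y \<in> {0,1}" if "y \<in> {1..n}" for y
      using g that unfolding markov_policy_def by blast
    fix y assume y: "y \<in> {1..n}"
    have "g y = 0 \<or> g y = 1"
      using g y unfolding markov_policy_def by auto
    then have "Vlam n P c \<beta> lam y \<le> Hq n P c \<beta> lam (Vlam n P c \<beta> lam) y (g y)"
      using Vlam_eq_min[OF y, of c lam] by (elim disjE) simp_all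
    then show "?e y \<le> \<beta> * Pv (g y) ?e y"
      unfolding Jlam_eq[OF g y] Hq_def by (simp add: right_diff_distrib sum_subtractf)
  qed
  then show ?thesis
    by simp
qed

lemma optimal_iff_greedy: "optimal n P c \<beta> lam g \<longleftrightarrow> greedy c lam g"
proof
  assume opt: "optimal n P c \<beta> lam g"
  then have g: "markov_policy n g"
    unfolding optimal_def by blast
  obtain g0 where g0: "greedy c lam g0"
    using greedy_exists by blast
  have J_eq_V: "Jlam n P c \<beta> lam g x = Vlam n P c \<beta> lam x" if "x \<in> {1..n}" for x
    using opt g0 that Jlam_eq_Vlam_if_greedy[OF g0 that] Vlam_le_Jlam[OF g that]
    unfolding optimal_def greedy_def by (metis order_antisym)
  have "Hq n P c \<beta> lam (Vlam n P c \<beta> lam) x (g x) = Vlam n P c \<beta> lam x" if x: "x \<in> {1..n}" for x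
  proof -
    have "Pv (g x) (Vlam n P c \<beta> lam) x = Pv (g x) (Jlam n P c \<beta> lam g) x"
      using J_eq_V by (intro sum.cong) auto
    then show ?thesis
      unfolding Hq_def using Jlam_eq[OF g x, of c lam] J_eq_V[OF x] by simp
  qed
  then show "greedy c lam g"
    unfolding greedy_def using g by blast
next
  assume g: "greedy c lam g"
  then show "optimal n P c \<beta> lam g"
    unfolding optimal_def using Vlam_le_Jlam by (auto simp: greedy_def Jlam_eq_Vlam_if_greedy[OF g])
qed

lemma optimal_swap_if_Nact_le:
  assumes "lam1 < lam2" and opt1: "optimal n P c \<beta> lam1 g1" and opt2: "optimal n P c \<beta> lam2 g2"
    and N: "\<And>x. x \<in> {1..n} \<Longrightarrow> Nact n P \<beta> g1 x \<le> Nact n P \<beta> g2 x"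
  shows "optimal n P c \<beta> lam1 g2 \<and> optimal n P c \<beta> lam2 g1"
proof -
  have g1: "markov_policy n g1" and g2: "markov_policy n g2"
    using opt1 opt2 unfolding optimal_def by blast+
  have same: "Nact n P \<beta> g1 x = Nact n P \<beta> g2 x \<and> Dcost n P c \<beta> g1 x = Dcost n P c \<beta> g2 x"
    if x: "x \<in> {1..n}" for x
  proof -
    have "Jlam n P c \<beta> lam1 g1 x \<le> Jlam n P c \<beta> lam1 g2 x" "Jlam n P c \<beta> lam2 g2 x \<le> Jlam n P c \<beta> lam2 g1 x"
      using opt1 opt2 g1 g2 x unfolding optimal_def by blast+
    then have le1: "Dcost n P c \<beta> g1 x + lam1 * Nact n P \<beta> g1 x \<le> Dcost n P c \<beta> g2 x + lam1 * Nact n P \<beta> g2 x"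
      and le2: "Dcost n P c \<beta> g2 x + lam2 * Nact n P \<beta> g2 x \<le> Dcost n P c \<beta> g1 x + lam2 * Nact n P \<beta> g1 x"
      unfolding Jlam_eq_Dcost_Nact[OF g1] Jlam_eq_Dcost_Nact[OF g2] .
    then have "(lam2 - lam1) * (Nact n P \<beta> g2 x - Nact n P \<beta> g1 x) \<le> 0"
      by (simp add: algebra_simps)
    then have "Nact n P \<beta> g2 x \<le> Nact n P \<beta> g1 x"
      using \<open>lam1 < lam2\<close> by (simp add: mult_le_0_iff)
    then show ?thesis
      using N[OF x] le1 le2 by auto
  qed
  then have "Jlam n P c \<beta> lam g2 x = Jlam n P c \<beta> lam g1 x" if "x \<in> {1..n}" for lam x
    using that by (simp add: Jlam_eq_Dcost_Nact[OF g1] Jlam_eq_Dcost_Nact[OF g2])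
  then show ?thesis
    using opt1 opt2 g1 g2 unfolding optimal_def by auto
qed

definition action_gap :: "(nat \<Rightarrow> nat \<Rightarrow> real) \<Rightarrow> real \<Rightarrow> nat \<Rightarrow> real" where
  "action_gap c lam x =
     Hq n P c \<beta> lam (Vlam n P c \<beta> lam) x 1 - Hq n P c \<beta> lam (Vlam n P c \<beta> lam) x 0"

lemma markov_policy_thr: "markov_policy n (thr l)"
  unfolding markov_policy_def thr_def by auto

lemma greedy_thr_iff:
  "greedy c lam (thr l) \<longleftrightarrow>
     (\<forall>x\<in>{1..n}. (x \<le> l \<longrightarrow> 0 \<le> action_gap c lam x) \<and> (l < x \<longrightarrow> action_gap c lam x \<le> 0))"
  unfolding greedy_def action_gap_def thr_def using Vlam_eq_min[of _ c lam] markov_policy_thr[of l]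
  by (auto simp: thr_def min_def)

lemma Vlam_lipschitz:
  assumes "x \<in> {1..n}"
  shows "\<bar>Vlam n P c \<beta> lam x - Vlam n P c \<beta> mu x\<bar> \<le> \<bar>lam - mu\<bar>"
proof (rule bellman_fixpoint_dist[OF bellman_fixpoint_Vlam bellman_fixpoint_Vlam _ assms])
  show "\<bar>c y a + lam * real a - (c y a + mu * real a)\<bar> \<le> \<bar>lam - mu\<bar>" if "a \<in> {0,1}" for y a
    using that by auto
qed

text \<open>Charging \<open>lam\<close> per active step with zero cost has value \<open>min lam 0\<close>, so
  \<^const>\<open>Vlam\<close> stays within the cost bound of it.\<close>
lemma Vlam_near_min:
  assumes K: "\<And>y a. y \<in> {1..n} \<Longrightarrow> a \<in> {0,1} \<Longrightarrow> \<bar>c y a\<bar> \<le> K" and x: "x \<in> {1..n}"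
  shows "\<bar>Vlam n P c \<beta> lam x - min lam 0\<bar> \<le> K"
proof (rule bellman_fixpoint_dist[OF bellman_fixpoint_Vlam _ _ x])
  show "bellman_fixpoint (\<lambda>_ _. 0) lam (\<lambda>_. min lam 0)"
    unfolding bellman_fixpoint_def
  proof
    fix y assume y: "y \<in> {1..n}"
    have H0: "Hq n P (\<lambda>_ _. 0) \<beta> lam (\<lambda>_. min lam 0) y 0 = \<beta> * min lam 0"
      and H1: "Hq n P (\<lambda>_ _. 0) \<beta> lam (\<lambda>_. min lam 0) y 1 = (1 - \<beta>) * lam + \<beta> * min lam 0"
      using Pv_const[OF _ y, of 0 "min lam 0"] Pv_const[OF _ y, of 1 "min lam 0"] by (simp_all add: Hq_def)
    have "min lam 0 = min (\<beta> * min lam 0) ((1 - \<beta>) * lam + \<beta> * min lam 0)"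
    proof (cases "lam \<le> 0")
      case True
      then have "lam \<le> \<beta> * lam"
        using mult_right_mono_neg[of \<beta> 1 lam] discount_lt_1 by simp
      then show ?thesis
        using True by (simp add: min_def algebra_simps)
    next
      case False
      then show ?thesis
        using discount_lt_1 by (simp add: min_def)
    qed
    then show "min lam 0 = min (Hq n P (\<lambda>_ _. 0) \<beta> lam (\<lambda>_. min lam 0) y 0)
        (Hq n P (\<lambda>_ _. 0) \<beta> lam (\<lambda>_. min lam 0) y 1)"
      unfolding H0 H1 .
  qed
  show "\<bar>c y a + lam * real a - (0 + lam * real a)\<bar> \<le> K" if "y \<in> {1..n}" "a \<in> {0,1}" for y a
    using K[OF that] by simp
qed

lemma action_gap_eq:
  "action_gap c lam x = (1 - \<beta>) * (c x 1 - c x 0 + lam)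
     + \<beta> * (Pv 1 (Vlam n P c \<beta> lam) x - Pv 0 (Vlam n P c \<beta> lam) x)"
  unfolding action_gap_def Hq_def by (simp add: algebra_simps)

lemma action_gap_lipschitz:
  assumes s: "s \<in> {1..n}"
  shows "\<bar>action_gap c lam s - action_gap c mu s\<bar> \<le> 2 * \<bar>lam - mu\<bar>"
proof -
  let ?d = "\<lambda>y. Vlam n P c \<beta> lam y - Vlam n P c \<beta> mu y"
  have Pd: "\<bar>Pv a ?d s\<bar> \<le> \<bar>lam - mu\<bar>" if a: "a \<in> {0,1}" for a
  proof -
    have "Pv a (\<lambda>y. \<bar>?d y\<bar>) s \<le> \<bar>lam - mu\<bar>"
      by (rule Pv_le[OF a s]) (rule Vlam_lipschitz)
    then show ?thesis
      using abs_Pv_le[OF a s, of ?d] by linarith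
  qed
  have "\<bar>Pv 1 ?d s - Pv 0 ?d s\<bar> \<le> 2 * \<bar>lam - mu\<bar>"
    using abs_triangle_ineq4[of "Pv 1 ?d s" "Pv 0 ?d s"] Pd[of 0] Pd[of 1] by simp
  then have Pd_diff: "\<beta> * \<bar>Pv 1 ?d s - Pv 0 ?d s\<bar> \<le> \<beta> * (2 * \<bar>lam - mu\<bar>)"
    using discount_pos by (simp add: mult_left_mono)
  have gap_diff: "action_gap c lam s - action_gap c mu s
      = (1 - \<beta>) * (lam - mu) + \<beta> * (Pv 1 ?d s - Pv 0 ?d s)"
    unfolding action_gap_eq by (simp add: algebra_simps sum_subtractf)
  have "\<bar>(1 - \<beta>) * (lam - mu) + \<beta> * (Pv 1 ?d s - Pv 0 ?d s)\<bar>
      \<le> (1 - \<beta>) * \<bar>lam - mu\<bar> + \<beta> * \<bar>Pv 1 ?d s - Pv 0 ?d s\<bar>"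
    using abs_triangle_ineq[of "(1 - \<beta>) * (lam - mu)" "\<beta> * (Pv 1 ?d s - Pv 0 ?d s)"]
      discount_pos discount_lt_1 by (simp add: abs_mult)
  moreover have "\<beta> * \<bar>lam - mu\<bar> \<le> \<bar>lam - mu\<bar>"
    using discount_pos discount_lt_1 by (simp add: mult_left_le_one_le)
  ultimately show ?thesis
    unfolding gap_diff using Pd_diff by (simp add: algebra_simps)
qed

lemma continuous_on_action_gap: "s \<in> {1..n} \<Longrightarrow> continuous_on UNIV (\<lambda>lam. action_gap c lam s)"
  by (rule lipschitz_on_continuous_on[of 2])
    (simp add: lipschitz_on_def dist_real_def action_gap_lipschitz)

lemma abs_action_gap_minus_linear_le:
  assumes K: "\<And>y a. y \<in> {1..n} \<Longrightarrow> a \<in> {0,1} \<Longrightarrow> \<bar>c y a\<bar> \<le> K" and s: "s \<in> {1..n}"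
  shows "\<bar>action_gap c lam s - (1 - \<beta>) * lam\<bar> \<le> 2 * K"
proof -
  let ?V = "Vlam n P c \<beta> lam"
  have V: "min lam 0 - K \<le> ?V y \<and> ?V y \<le> min lam 0 + K" if "y \<in> {1..n}" for y
    using Vlam_near_min[of c K y lam] K that by (simp add: abs_le_iff)
  have "Pv a ?V s \<le> min lam 0 + K" "min lam 0 - K \<le> Pv a ?V s" if "a \<in> {0,1}" for a
    by (rule Pv_le[OF that s] Pv_ge[OF that s], use V in blast)+
  from this[of 0] this[of 1] have "\<bar>Pv 1 ?V s - Pv 0 ?V s\<bar> \<le> 2 * K"
    by (simp add: abs_le_iff)
  then have "\<beta> * \<bar>Pv 1 ?V s - Pv 0 ?V s\<bar> \<le> \<beta> * (2 * K)"
    using discount_pos by (simp add: mult_left_mono)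
  moreover have "\<bar>c s 1 - c s 0\<bar> \<le> 2 * K"
    using K[OF s, of 0] K[OF s, of 1] by (auto simp: abs_le_iff)
  then have "(1 - \<beta>) * \<bar>c s 1 - c s 0\<bar> \<le> (1 - \<beta>) * (2 * K)"
    using discount_lt_1 by (simp add: mult_left_mono)
  moreover have "action_gap c lam s - (1 - \<beta>) * lam
      = (1 - \<beta>) * (c s 1 - c s 0) + \<beta> * (Pv 1 ?V s - Pv 0 ?V s)"
    unfolding action_gap_eq by (simp add: algebra_simps)
  then have "\<bar>action_gap c lam s - (1 - \<beta>) * lam\<bar>
      \<le> (1 - \<beta>) * \<bar>c s 1 - c s 0\<bar> + \<beta> * \<bar>Pv 1 ?V s - Pv 0 ?V s\<bar>"
    using abs_triangle_ineq[of "(1 - \<beta>) * (c s 1 - c s 0)" "\<beta> * (Pv 1 ?V s - Pv 0 ?V s)"]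
      discount_pos discount_lt_1 by (simp add: abs_mult)
  ultimately show ?thesis
    by (simp add: algebra_simps)
qed

lemma action_gap_near_linear:
  assumes s: "s \<in> {1..n}"
  shows "\<exists>K. \<forall>lam. \<bar>action_gap c lam s - (1 - \<beta>) * lam\<bar> \<le> K"
proof -
  define K where "K = (\<Sum>y\<in>{1..n}. \<bar>c y 0\<bar> + \<bar>c y 1\<bar>)"
  have "\<bar>c y a\<bar> \<le> K" if "y \<in> {1..n}" "a \<in> {0,1}" for y a
  proof -
    have "\<bar>c y a\<bar> \<le> \<bar>c y 0\<bar> + \<bar>c y 1\<bar>"
      using that by auto
    also have "\<dots> \<le> K"
      unfolding K_def using that by (intro member_le_sum) auto
    finally show ?thesis .
  qed
  then show ?thesis
    using abs_action_gap_minus_linear_le[OF _ s] by blast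
qed

lemma passive_set_eq: "passive_set n P c \<beta> lam = {x\<in>{1..n}. 0 < action_gap c lam x}"
  unfolding passive_set_def action_gap_def by simp

lemma whittle_eq_Inf: "s \<in> {1..n} \<Longrightarrow> whittle n P c \<beta> s = Inf {lam. 0 < action_gap c lam s}"
  unfolding whittle_def passive_set_def action_gap_def by simp

lemma exists_pos_action_gap:
  assumes "s \<in> {1..n}"
  shows "\<exists>lam. 0 < action_gap c lam s"
proof -
  obtain K where K: "\<And>lam. \<bar>action_gap c lam s - (1 - \<beta>) * lam\<bar> \<le> K"
    using action_gap_near_linear[OF assms] by blast
  have "\<bar>action_gap c ((K + 1) / (1 - \<beta>)) s - (K + 1)\<bar> \<le> K"
    using K[of "(K + 1) / (1 - \<beta>)"] discount_lt_1 by simp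
  then have "0 < action_gap c ((K + 1) / (1 - \<beta>)) s"
    by (auto simp: abs_le_iff)
  then show ?thesis
    by blast
qed

lemma pos_action_gap_bounded_below:
  assumes "s \<in> {1..n}"
  shows "\<exists>lo. \<forall>lam. 0 < action_gap c lam s \<longrightarrow> lo < lam"
proof -
  obtain K where K: "\<And>lam. \<bar>action_gap c lam s - (1 - \<beta>) * lam\<bar> \<le> K"
    using action_gap_near_linear[OF assms] by blast
  have "- K / (1 - \<beta>) - 1 < lam" if "0 < action_gap c lam s" for lam
  proof -
    have "- K < (1 - \<beta>) * lam"
      using K[of lam] that by auto
    then show ?thesis
      using discount_lt_1 by (simp add: field_simps)
  qed
  then show ?thesis
    by blast
qed

text \<open>The charges making \<open>s\<close> strictly passive form an open set that is bounded below,
  so the gap vanishes at its infimum.\<close>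
lemma action_gap_whittle:
  assumes s: "s \<in> {1..n}"
  shows "action_gap c (whittle n P c \<beta> s) s = 0"
proof -
  let ?A = "{lam. 0 < action_gap c lam s}"
  have cont: "continuous_on UNIV (\<lambda>lam. action_gap c lam s)"
    by (rule continuous_on_action_gap[OF s])
  obtain lo where lo: "\<And>lam. lam \<in> ?A \<Longrightarrow> lo < lam"
    using pos_action_gap_bounded_below[OF s] by auto
  have nonempty: "?A \<noteq> {}"
    using exists_pos_action_gap[OF s] by auto
  have bdd: "bdd_below ?A"
    using lo by (meson bdd_belowI less_imp_le)
  have "Inf ?A \<notin> ?A"
    using Inf_notin_open[OF open_Collect_less[OF continuous_on_const cont]] lo by blast
  moreover have "closure ?A \<subseteq> {lam. 0 \<le> action_gap c lam s}"
    using closed_Collect_le[OF continuous_on_const cont] by (intro closure_minimal) auto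
  then have "0 \<le> action_gap c (Inf ?A) s"
    using closure_contains_Inf[OF nonempty bdd] by blast
  ultimately show ?thesis
    unfolding whittle_eq_Inf[OF s] by simp
qed

end

section \<open>Stochastically monotone bandits\<close>

locale monotone_mdp = discounted_mdp +
  assumes tail_mono: "a \<in> {0,1} \<Longrightarrow> x \<in> {1..n} \<Longrightarrow> y \<in> {1..n} \<Longrightarrow> x \<le> y \<Longrightarrow> z \<in> {1..n} \<Longrightarrow>
      (\<Sum>w\<in>{z..n}. P a x w) \<le> (\<Sum>w\<in>{z..n}. P a y w)"
    and tail_submodular: "x \<in> {1..n} \<Longrightarrow> y \<in> {1..n} \<Longrightarrow> x \<le> y \<Longrightarrow> z \<in> {1..n} \<Longrightarrow>
      (\<Sum>w\<in>{z..n}. P 1 y w) - (\<Sum>w\<in>{z..n}. P 0 y w) \<le> (\<Sum>w\<in>{z..n}. P 1 x w) - (\<Sum>w\<in>{z..n}. P 0 x w)"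
begin

lemma Pv_eq_tail_sums:
  assumes "a \<in> {0,1}" "x \<in> {1..n}"
  shows "Pv a W x = W 1 + (\<Sum>z\<in>{2..n}. (W z - W (z - 1)) * (\<Sum>w\<in>{z..n}. P a x w))"
  using sum_mult_eq_tail_sums[of "P a x" W n] P_row_sum[OF assms] by simp

lemma mono_on_increment_nonneg:
  fixes W :: "nat \<Rightarrow> real"
  assumes "mono_on {1..n} W" "z \<in> {2..n}"
  shows "0 \<le> W z - W (z - 1)"
proof -
  have "W (z - 1) \<le> W z"
    by (rule mono_onD[OF assms(1)]) (use assms(2) in auto)
  then show ?thesis
    by simp
qed

lemma Pv_mono:
  assumes W: "mono_on {1..n} W" and a: "a \<in> {0,1}"
    and x: "x \<in> {1..n}" and y: "y \<in> {1..n}" and "x \<le> y"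
  shows "Pv a W x \<le> Pv a W y"
  unfolding Pv_eq_tail_sums[OF a x] Pv_eq_tail_sums[OF a y]
  using assms mono_on_increment_nonneg[OF W] by (intro add_left_mono sum_mono mult_left_mono tail_mono) auto

lemma Pv_gap_antimono:
  assumes W: "mono_on {1..n} W" and x: "x \<in> {1..n}" and y: "y \<in> {1..n}" and "x \<le> y"
  shows "Pv 1 W y - Pv 0 W y \<le> Pv 1 W x - Pv 0 W x"
proof -
  have gap: "Pv 1 W u - Pv 0 W u
      = (\<Sum>z\<in>{2..n}. (W z - W (z - 1)) * ((\<Sum>w\<in>{z..n}. P 1 u w) - (\<Sum>w\<in>{z..n}. P 0 u w)))"
    if "u \<in> {1..n}" for u
  proof -
    have "Pv 1 W u = W 1 + (\<Sum>z\<in>{2..n}. (W z - W (z - 1)) * (\<Sum>w\<in>{z..n}. P 1 u w))"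
      by (rule Pv_eq_tail_sums) (use that in auto)
    moreover have "Pv 0 W u = W 1 + (\<Sum>z\<in>{2..n}. (W z - W (z - 1)) * (\<Sum>w\<in>{z..n}. P 0 u w))"
      by (rule Pv_eq_tail_sums) (use that in auto)
    ultimately show ?thesis
      by (simp add: right_diff_distrib sum_subtractf)
  qed
  show ?thesis
    unfolding gap[OF x] gap[OF y]
    using assms mono_on_increment_nonneg[OF W] by (intro sum_mono mult_left_mono tail_submodular) auto
qed

end

locale monotone_rb = monotone_mdp +
  fixes c :: "nat \<Rightarrow> nat \<Rightarrow> real"
  assumes cost_mono: "a \<in> {0,1} \<Longrightarrow> x \<in> {1..n} \<Longrightarrow> y \<in> {1..n} \<Longrightarrow> x \<le> y \<Longrightarrow> c x a \<le> c y a"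
    and cost_submodular: "x \<in> {1..n} \<Longrightarrow> y \<in> {1..n} \<Longrightarrow> x \<le> y \<Longrightarrow> c y 1 - c y 0 \<le> c x 1 - c x 0"
begin

lemma bellman_op_mono_on:
  assumes v: "mono_on {1..n} v"
  shows "mono_on {1..n} (bellman_op c lam v)"
proof (rule mono_onI)
  fix x y assume x: "x \<in> {1..n}" and y: "y \<in> {1..n}" and "x \<le> y"
  have "Hq n P c \<beta> lam v x a \<le> Hq n P c \<beta> lam v y a" if a: "a \<in> {0,1}" for a
  proof -
    have "(1 - \<beta>) * (c x a + lam * real a) \<le> (1 - \<beta>) * (c y a + lam * real a)"
      using cost_mono[OF a x y \<open>x \<le> y\<close>] discount_lt_1 by simp
    moreover have "\<beta> * Pv a v x \<le> \<beta> * Pv a v y"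
      using Pv_mono[OF v a x y \<open>x \<le> y\<close>] discount_pos by simp
    ultimately show ?thesis
      unfolding Hq_def by linarith
  qed
  from this[of 0] this[of 1] show "bellman_op c lam v x \<le> bellman_op c lam v y"
    unfolding bellman_op_def using x y by (auto simp: min_def)
qed

lemma Vlam_mono_on: "mono_on {1..n} (Vlam n P c \<beta> lam)"
proof (rule mono_onI)
  fix x y assume x: "x \<in> {1..n}" and y: "y \<in> {1..n}" and "x \<le> y"
  have mono_k: "mono_on {1..n} (value_iter c lam k)" for k
  proof (induction k)
    case 0
    then show ?case
      by (simp add: value_iter_def mono_on_def)
  next
    case (Suc k)
    then show ?case
      unfolding value_iter_Suc by (rule bellman_op_mono_on)
  qed
  have "value_iter c lam k x \<le> value_iter c lam k y" for k
    using mono_onD[OF mono_k x y \<open>x \<le> y\<close>] .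
  then show "Vlam n P c \<beta> lam x \<le> Vlam n P c \<beta> lam y"
    unfolding Vlam_eq_value_limit by (intro LIMSEQ_le[OF value_iter_tendsto value_iter_tendsto]) auto
qed

lemma action_gap_antimono:
  assumes "x \<in> {1..n}" "y \<in> {1..n}" "x \<le> y"
  shows "action_gap c lam y \<le> action_gap c lam x"
  unfolding action_gap_eq
  using cost_submodular[OF assms] Pv_gap_antimono[OF Vlam_mono_on assms] discount_pos discount_lt_1
  by (intro add_mono mult_left_mono) auto

definition passive_threshold :: "real \<Rightarrow> nat" where
  "passive_threshold lam = Max (insert 0 {x\<in>{1..n}. 0 < action_gap c lam x})"

lemma passive_threshold_le: "passive_threshold lam \<le> n"
  unfolding passive_threshold_def by (subst Max_le_iff) auto

lemma pos_action_gap_iff: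
  assumes x: "x \<in> {1..n}"
  shows "0 < action_gap c lam x \<longleftrightarrow> x \<le> passive_threshold lam"
proof
  assume "0 < action_gap c lam x"
  then show "x \<le> passive_threshold lam"
    unfolding passive_threshold_def using x by (intro Max_ge) auto
next
  let ?S = "insert 0 {x\<in>{1..n}. 0 < action_gap c lam x}"
  assume "x \<le> passive_threshold lam"
  moreover have "passive_threshold lam \<in> ?S"
    unfolding passive_threshold_def by (intro Max_in) auto
  ultimately have m: "passive_threshold lam \<in> {1..n}" "0 < action_gap c lam (passive_threshold lam)"
    using x by auto
  then show "0 < action_gap c lam x"
    using action_gap_antimono[OF x m(1) \<open>x \<le> passive_threshold lam\<close>, of lam] by linarith
qed

lemma greedy_passive_threshold: "greedy c lam (thr (passive_threshold lam))"
  unfolding greedy_thr_iff using pos_action_gap_iff by (meson less_imp_le not_le)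

lemma optimal_threshold_exists: "\<exists>l\<in>{0..n}. optimal n P c \<beta> lam (thr l)"
  using passive_threshold_le[of lam] greedy_passive_threshold[of lam] by (auto simp: optimal_iff_greedy)

lemma ell_optimal: "ell n P c \<beta> lam \<le> n \<and> optimal n P c \<beta> lam (thr (ell n P c \<beta> lam))"
proof -
  let ?S = "{l\<in>{0..n}. optimal n P c \<beta> lam (thr l)}"
  have "?S \<noteq> {}"
    using optimal_threshold_exists[of lam] by auto
  from Max_in[OF _ this] show ?thesis
    unfolding ell_def by auto
qed

lemma ell_greatest: "l \<le> n \<Longrightarrow> optimal n P c \<beta> lam (thr l) \<Longrightarrow> l \<le> ell n P c \<beta> lam"
  unfolding ell_def by (intro Max_ge) auto

lemma mono_ell_if_Nact_antimono:
  assumes Nact_antimono: "\<And>x l1 l2. x \<in> {1..n} \<Longrightarrow> l1 \<le> l2 \<Longrightarrow> l2 \<le> n \<Longrightarrow>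
      Nact n P \<beta> (thr l2) x \<le> Nact n P \<beta> (thr l1) x"
  shows "mono (ell n P c \<beta>)"
proof (rule monoI, rule ccontr)
  fix lam1 lam2 :: real
  assume "lam1 \<le> lam2" and gt: "\<not> ell n P c \<beta> lam1 \<le> ell n P c \<beta> lam2"
  then have "lam1 < lam2"
    by (cases "lam1 = lam2") auto
  then have "optimal n P c \<beta> lam2 (thr (ell n P c \<beta> lam1))"
    using optimal_swap_if_Nact_le[OF _ conjunct2[OF ell_optimal] conjunct2[OF ell_optimal]]
      Nact_antimono ell_optimal gt by simp
  then show False
    using ell_greatest ell_optimal gt by blast
qed

lemma indexable_if_Nact_antimono:
  assumes Nact_antimono: "\<And>x l1 l2. x \<in> {1..n} \<Longrightarrow> l1 \<le> l2 \<Longrightarrow> l2 \<le> n \<Longrightarrow>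
      Nact n P \<beta> (thr l2) x \<le> Nact n P \<beta> (thr l1) x"
  shows "indexable n P c \<beta>"
  unfolding indexable_def passive_set_eq
proof (intro allI impI subsetI)
  fix lam1 lam2 x
  assume "lam1 \<le> lam2" and x: "x \<in> {x \<in> {1..n}. 0 < action_gap c lam1 x}"
  show "x \<in> {x \<in> {1..n}. 0 < action_gap c lam2 x}"
  proof (rule ccontr)
    let ?a = "passive_threshold lam1" and ?b = "passive_threshold lam2"
    assume not_passive: "x \<notin> {x \<in> {1..n}. 0 < action_gap c lam2 x}"
    then have "lam1 < lam2"
      using \<open>lam1 \<le> lam2\<close> x by (cases "lam1 = lam2") auto
    have "?b < x" "x \<le> ?a"
      using x not_passive pos_action_gap_iff by auto
    have opt1: "optimal n P c \<beta> lam1 (thr ?a)" and opt2: "optimal n P c \<beta> lam2 (thr ?b)"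
      using greedy_passive_threshold by (simp_all add: optimal_iff_greedy)
    have N: "Nact n P \<beta> (thr ?a) y \<le> Nact n P \<beta> (thr ?b) y" if "y \<in> {1..n}" for y
      using Nact_antimono[OF that, of ?b ?a] \<open>?b < x\<close> \<open>x \<le> ?a\<close> passive_threshold_le[of lam1] by linarith
    have "optimal n P c \<beta> lam1 (thr ?b)"
      using optimal_swap_if_Nact_le[OF \<open>lam1 < lam2\<close> opt1 opt2 N] ..
    then have "action_gap c lam1 x \<le> 0"
      using \<open>?b < x\<close> x unfolding optimal_iff_greedy greedy_thr_iff by auto
    then show False
      using x by simp
  qed
qed

lemma whittle_mono_on: "mono_on {1..n} (whittle n P c \<beta>)"
proof (rule mono_onI)
  fix x y assume x: "x \<in> {1..n}" and y: "y \<in> {1..n}" and "x \<le> y"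
  have subset: "{lam. 0 < action_gap c lam y} \<subseteq> {lam. 0 < action_gap c lam x}"
  proof
    fix lam assume "lam \<in> {lam. 0 < action_gap c lam y}"
    then show "lam \<in> {lam. 0 < action_gap c lam x}"
      using action_gap_antimono[OF x y \<open>x \<le> y\<close>, of lam] by simp
  qed
  have nonempty: "{lam. 0 < action_gap c lam y} \<noteq> {}"
    using exists_pos_action_gap[OF y] by auto
  obtain lo where "\<And>lam. 0 < action_gap c lam x \<Longrightarrow> lo < lam"
    using pos_action_gap_bounded_below[OF x] by blast
  then have bdd: "bdd_below {lam. 0 < action_gap c lam x}"
    by (intro bdd_belowI[of _ lo]) (simp add: less_imp_le)
  show "whittle n P c \<beta> x \<le> whittle n P c \<beta> y"
    unfolding whittle_eq_Inf[OF x] whittle_eq_Inf[OF y] by (rule cInf_superset_mono[OF nonempty bdd subset])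
qed

lemma greedy_thr_at_whittle:
  assumes "l < n"
  shows "greedy c (whittle n P c \<beta> (l + 1)) (thr l) \<and> greedy c (whittle n P c \<beta> (l + 1)) (thr (l + 1))"
proof -
  let ?w = "whittle n P c \<beta> (l + 1)"
  have s: "l + 1 \<in> {1..n}"
    using assms by auto
  have zero: "action_gap c ?w (l + 1) = 0"
    by (rule action_gap_whittle[OF s])
  have "0 \<le> action_gap c ?w x" if "x \<in> {1..n}" "x \<le> l + 1" for x
    using action_gap_antimono[OF that(1) s that(2), of ?w] zero by simp
  moreover have "action_gap c ?w x \<le> 0" if "x \<in> {1..n}" "l + 1 \<le> x" for x
    using action_gap_antimono[OF s that, of ?w] zero by simp
  ultimately show ?thesis
    unfolding greedy_thr_iff by simp
qed

lemma Dcost_Nact_balance_at_whittle: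
  assumes "l < n" "x \<in> {1..n}"
  shows "Dcost n P c \<beta> (thr l) x + whittle n P c \<beta> (l + 1) * Nact n P \<beta> (thr l) x
    = Dcost n P c \<beta> (thr (l + 1)) x + whittle n P c \<beta> (l + 1) * Nact n P \<beta> (thr (l + 1)) x"
proof -
  let ?w = "whittle n P c \<beta> (l + 1)"
  have "Jlam n P c \<beta> ?w (thr l) x = Vlam n P c \<beta> ?w x"
    and "Jlam n P c \<beta> ?w (thr (l + 1)) x = Vlam n P c \<beta> ?w x"
    using greedy_thr_at_whittle[OF assms(1)] Jlam_eq_Vlam_if_greedy assms(2) by blast+
  then show ?thesis
    by (simp add: Jlam_eq_Dcost_Nact[OF markov_policy_thr])
qed

lemma whittle_eq_ratio:
  assumes "l < n" "x \<in> {1..n}" and "Nact n P \<beta> (thr l) x \<noteq> Nact n P \<beta> (thr (l + 1)) x"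
  shows "whittle n P c \<beta> (l + 1)
    = (Dcost n P c \<beta> (thr (l + 1)) x - Dcost n P c \<beta> (thr l) x)
        / (Nact n P \<beta> (thr l) x - Nact n P \<beta> (thr (l + 1)) x)"
proof -
  have "Nact n P \<beta> (thr l) x - Nact n P \<beta> (thr (l + 1)) x \<noteq> 0"
    using assms(3) by simp
  with Dcost_Nact_balance_at_whittle[OF assms(1,2)] show ?thesis
    by (simp add: eq_divide_eq algebra_simps)
qed

end

context monotone_mdp
begin

lemma monotone_rb_bumped_cost:
  assumes "0 \<le> t" "t \<le> 1"
  shows "monotone_rb n P \<beta> (\<lambda>x a. real x * (2 - real a) + t * (if x = s \<and> a = 1 then 1 else 0))"
proof -
  let ?c = "\<lambda>x a. real x * (2 - real a) + t * (if x = s \<and> a = 1 then 1 else 0)"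
  have step: "real x + 1 \<le> real y" if "x \<le> y" "x \<noteq> y" for x y :: nat
    using that by linarith
  show ?thesis
  proof
    show "?c x a \<le> ?c y a" if "a \<in> {0,1}" "x \<le> y" for a x y
      using that assms step[of x y] by (cases "x = y") auto
    show "?c y 1 - ?c y 0 \<le> ?c x 1 - ?c x 0" if "x \<le> y" for x y
      using that assms step[of x y] by (cases "x = y") auto
  qed
qed

text \<open>For every admissible cost, the Whittle charge balances \<open>thr l\<close> against \<open>thr (l + 1)\<close>. If
  the two policies had equal activity everywhere, their costs would therefore agree for every
  admissible cost; two admissible costs differing only at the state \<open>l + 1\<close> and the active action
  show that they do not.\<close>
lemma Nact_thr_differs:
  assumes l: "l < n"
  shows "\<exists>x\<in>{1..n}. Nact n P \<beta> (thr l) x \<noteq> Nact n P \<beta> (thr (l + 1)) x"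
proof (rule ccontr)
  let ?s = "l + 1"
  let ?c = "\<lambda>x a. real x * (2 - real a)" and ?e = "\<lambda>x a. if x = ?s \<and> a = 1 then 1 else 0"
  have s: "?s \<in> {1..n}"
    using l by auto
  assume "\<not> ?thesis"
  then have same_Dcost: "Dcost n P c \<beta> (thr l) ?s = Dcost n P c \<beta> (thr ?s) ?s"
    if "monotone_rb n P \<beta> c" for c
    using monotone_rb.Dcost_Nact_balance_at_whittle[OF that l s] s by auto
  have bumped: "Dcost n P (\<lambda>x a. ?c x a + t * ?e x a) \<beta> (thr k) ?s
      = Dcost n P ?c \<beta> (thr k) ?s + t * disc_val n P \<beta> (thr k) ?e ?s" for t k
    unfolding Dcost_def by (rule disc_val_add_scaled[OF markov_policy_thr])
  have "disc_val n P \<beta> (thr ?s) ?e ?s = 0"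
    unfolding disc_val_def by (simp add: thr_def cong: conj_cong)
  moreover have "0 < disc_val n P \<beta> (thr l) ?e ?s"
    by (rule disc_val_pos[OF markov_policy_thr s]) (auto simp: thr_def)
  ultimately show False
    using same_Dcost[OF monotone_rb_bumped_cost[of 0 ?s]] same_Dcost[OF monotone_rb_bumped_cost[of 1 ?s]]
      bumped[of 0] bumped[of 1] by simp
qed

end

lemma monotone_rbI:
  fixes n :: nat and P :: "nat \<Rightarrow> nat \<Rightarrow> nat \<Rightarrow> real" and c :: "nat \<Rightarrow> nat \<Rightarrow> real" and \<beta> :: real
  assumes beta: "0 < \<beta>" "\<beta> < 1"
    and P_nonneg: "\<forall>a\<in>{0,1}. \<forall>x\<in>{1..n}. \<forall>y\<in>{1..n}. 0 \<le> P a x y"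
    and P_stoch: "\<forall>a\<in>{0,1}. \<forall>x\<in>{1..n}. (\<Sum>y\<in>{1..n}. P a x y) = 1"
    and D1: "\<forall>a\<in>{0,1}. \<forall>x\<in>{1..n}. \<forall>y\<in>{1..n}. x < y \<longrightarrow>
               (\<forall>z\<in>{1..n}. (\<Sum>w\<in>{z..n}. P a x w) \<le> (\<Sum>w\<in>{z..n}. P a y w))"
    and D2: "\<forall>z\<in>{1..n}. submodular_on {1..n} {0,1} (\<lambda>x a. \<Sum>w\<in>{z..n}. P a x w)"
    and D3: "\<forall>a\<in>{0,1}. mono_on {1..n} (\<lambda>x. c x a)"
    and D4: "submodular_on {1..n} {0,1} c"
  shows "monotone_rb n P \<beta> c"
proof unfold_locales
  show "0 < \<beta>" "\<beta> < 1"
    by (fact beta)+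
  show "0 \<le> P a x y" if "a \<in> {0,1}" "x \<in> {1..n}" "y \<in> {1..n}" for a x y
    using P_nonneg that by blast
  show "(\<Sum>y\<in>{1..n}. P a x y) = 1" if "a \<in> {0,1}" "x \<in> {1..n}" for a x
    using P_stoch that by blast
  show "(\<Sum>w\<in>{z..n}. P a x w) \<le> (\<Sum>w\<in>{z..n}. P a y w)"
    if "a \<in> {0,1}" "x \<in> {1..n}" "y \<in> {1..n}" "x \<le> y" "z \<in> {1..n}" for a x y z
    using D1 that by (cases "x = y") auto
  show "(\<Sum>w\<in>{z..n}. P 1 y w) - (\<Sum>w\<in>{z..n}. P 0 y w) \<le> (\<Sum>w\<in>{z..n}. P 1 x w) - (\<Sum>w\<in>{z..n}. P 0 x w)"
    if "x \<in> {1..n}" "y \<in> {1..n}" "x \<le> y" "z \<in> {1..n}" for x y z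
    using D2 that unfolding submodular_on_def by (metis insertI1 insertI2 zero_le_one)
  show "c x a \<le> c y a" if "a \<in> {0,1}" "x \<in> {1..n}" "y \<in> {1..n}" "x \<le> y" for a x y
    using mono_onD[of "{1..n}" "\<lambda>x. c x a" x y] D3 that by blast
  show "c y 1 - c y 0 \<le> c x 1 - c x 0" if "x \<in> {1..n}" "y \<in> {1..n}" "x \<le> y" for x y
    using D4 that unfolding submodular_on_def by (metis insertI1 insertI2 zero_le_one)
qed

theorem lemma5:
  fixes n :: nat and P :: "nat \<Rightarrow> nat \<Rightarrow> nat \<Rightarrow> real" and c :: "nat \<Rightarrow> nat \<Rightarrow> real" and \<beta> :: real
  assumes beta: "0 < \<beta>" "\<beta> < 1"
    and P_nonneg: "\<forall>a\<in>{0,1}. \<forall>x\<in>{1..n}. \<forall>y\<in>{1..n}. 0 \<le> P a x y"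
    and P_stoch: "\<forall>a\<in>{0,1}. \<forall>x\<in>{1..n}. (\<Sum>y\<in>{1..n}. P a x y) = 1"
    and D1: "\<forall>a\<in>{0,1}. \<forall>x\<in>{1..n}. \<forall>y\<in>{1..n}. x < y \<longrightarrow>
               (\<forall>z\<in>{1..n}. (\<Sum>w\<in>{z..n}. P a x w) \<le> (\<Sum>w\<in>{z..n}. P a y w))"
    and D2: "\<forall>z\<in>{1..n}. submodular_on {1..n} {0,1} (\<lambda>x a. \<Sum>w\<in>{z..n}. P a x w)"
    and D3: "\<forall>a\<in>{0,1}. mono_on {1..n} (\<lambda>x. c x a)"
    and D4: "submodular_on {1..n} {0,1} c"
  shows "(\<forall>lam. \<exists>l\<in>{0..n}. optimal n P c \<beta> lam (thr l)) \<and>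
         ((\<forall>x\<in>{1..n}. \<forall>l1\<in>{0..n}. \<forall>l2\<in>{0..n}. l1 \<le> l2 \<longrightarrow>
              Nact n P \<beta> (thr l2) x \<le> Nact n P \<beta> (thr l1) x) \<longrightarrow>
           (mono (ell n P c \<beta>) \<and> indexable n P c \<beta> \<and> mono_on {1..n} (whittle n P c \<beta>) \<and>
            (\<forall>l<n. {x\<in>{1..n}. Nact n P \<beta> (thr l) x \<noteq> Nact n P \<beta> (thr (l+1)) x} \<noteq> {} \<and>
               (\<forall>x\<in>{1..n}. Nact n P \<beta> (thr l) x \<noteq> Nact n P \<beta> (thr (l+1)) x \<longrightarrow>
                  whittle n P c \<beta> (l+1) =
                    (Dcost n P c \<beta> (thr (l+1)) x - Dcost n P c \<beta> (thr l) x) /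
                    (Nact n P \<beta> (thr l) x - Nact n P \<beta> (thr (l+1)) x)))))"
proof -
  interpret monotone_rb n P \<beta> c
    by (rule monotone_rbI[OF assms])
  have "mono (ell n P c \<beta>) \<and> indexable n P c \<beta>"
    if "\<forall>x\<in>{1..n}. \<forall>l1\<in>{0..n}. \<forall>l2\<in>{0..n}. l1 \<le> l2 \<longrightarrow> Nact n P \<beta> (thr l2) x \<le> Nact n P \<beta> (thr l1) x"
    using mono_ell_if_Nact_antimono indexable_if_Nact_antimono that by simp
  then show ?thesis
    using optimal_threshold_exists whittle_mono_on Nact_thr_differs whittle_eq_ratio by blast
qed

end
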